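(* Let $r\ge 2$ and let $p=p(n)$ satisfy $p=\omega(n^{-1})$ and $p=o(n^{-1/r})$. Let $U,W\subset[n]$ be sets of vertices of $G(n,p)$ with $|U|=n/(2^r r!\sqrt{e})$. Then with probability $1-\exp(-\Omega(p^{-1}))$ all but at most $p^{-1}$ vertices in $[n]\setminus(U\cup W)$ have at least $r$ neighbours in $U$.
   Context: $G(n,p)$ is the random graph on $[n]$ with each edge independently present with probability $p$; $U,W$ are fixed (not depending on the edges). Asymptotic notation refers to $n\to\infty$. *)

theory Defs
  imports "HOL-Probability.Probability" "HOL-Library.Landau_Symbols"
begin

definition gnp_edges :: "nat \<Rightarrow> nat set set" where
  "gnp_edges n = {{i, j} | i j. i < j \<and> j < n}"

text \<open>The binomial random graph G(n,p), given by its edge indicator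
  (each potential edge independently present with probability p; non-edges are False).\<close>
definition gnp :: "nat \<Rightarrow> real \<Rightarrow> (nat set \<Rightarrow> bool) pmf" where
  "gnp n p = Pi_pmf (gnp_edges n) False (\<lambda>_. bernoulli_pmf p)"

end

theory Submission
  imports Defs
begin

text \<open>Let \<open>k = \<lfloor>1/p\<rfloor> + 1\<close>. If \<open>k\<close> vertices of \<open>V = [n] - (U \<union> W)\<close> have fewer than \<open>r\<close>
  neighbours in \<open>U\<close>, then some \<open>k\<close>-subset \<open>T \<subseteq> V\<close> does. For a fixed \<open>T\<close> these events depend on
  disjoint sets of edges and each has probability \<open>q = P(Bin(|U|, p) < r)\<close>, so the union bound
  gives probability at most \<open>C(n, k) q^k \<le> (n q)^k / k!\<close>. Here \<open>q \<le> r e^r (1 + |U| p)^r e^(-|U| p)\<close>;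
  since \<open>|U| p \<rightarrow> \<infinity>\<close> and \<open>n = O(|U|)\<close> this gives \<open>n p q \<rightarrow> 0\<close>, hence eventually \<open>n q \<le> e^(-2) k\<close>,
  and \<open>k^k \<le> k! e^k\<close> bounds the probability by \<open>e^(-k) \<le> e^(-1/p)\<close>.\<close>

lemma finite_gnp_edges: "finite (gnp_edges n)"
proof -
  have "gnp_edges n \<subseteq> Pow {0..<n}" unfolding gnp_edges_def by auto
  thus ?thesis by (rule finite_subset) simp
qed

lemma doubleton_in_gnp_edges:
  assumes "u < n" "v < n" "u \<noteq> v"
  shows "{u, v} \<in> gnp_edges n"
proof (cases "u < v")
  case True
  thus ?thesis using assms unfolding gnp_edges_def by blast
next
  case False
  hence "v < u" using assms(3) by simp
  thus ?thesis using assms unfolding gnp_edges_def by (auto simp: insert_commute)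
qed

lemma prob_gnp_edges_eq:
  assumes "A \<subseteq> gnp_edges n" and "0 \<le> p" "p \<le> 1"
  shows "measure_pmf.prob (gnp n p) {G. \<forall>e\<in>A. G e = b e} = (\<Prod>e\<in>A. if b e then p else 1 - p)"
proof -
  have "{G. \<forall>e\<in>A. G e = b e} = Pi (gnp_edges n) (\<lambda>e. if e \<in> A then {b e} else UNIV)"
    using assms(1) by (auto simp: Pi_def)
  hence "measure_pmf.prob (gnp n p) {G. \<forall>e\<in>A. G e = b e} =
     (\<Prod>e\<in>gnp_edges n. measure_pmf.prob (bernoulli_pmf p) (if e \<in> A then {b e} else UNIV))"
    unfolding gnp_def by (simp add: measure_Pi_pmf_Pi[OF finite_gnp_edges])
  also have "\<dots> = (\<Prod>e\<in>gnp_edges n. if e \<in> A then (if b e then p else 1 - p) else 1)"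
    by (intro prod.cong) (use assms(2,3) in \<open>auto simp: measure_pmf_single\<close>)
  also have "\<dots> = (\<Prod>e\<in>A. if b e then p else 1 - p)"
    using assms(1) finite_gnp_edges by (simp add: prod.If_cases Int_absorb1)
  finally show ?thesis .
qed

text \<open>The edges \<open>{u, v}\<close> with \<open>u \<in> U\<close>, \<open>v \<in> T\<close> are pairwise distinct because \<open>U\<close> and \<open>T\<close> are disjoint.\<close>
lemma prob_gnp_neighbourhoods_eq:
  assumes U: "U \<subseteq> {0..<n}" and T: "T \<subseteq> {0..<n}" and disj: "U \<inter> T = {}"
    and N: "\<And>v. v \<in> T \<Longrightarrow> N v \<subseteq> U" and p: "0 \<le> p" "p \<le> 1"
  shows "measure_pmf.prob (gnp n p) {G. \<forall>v\<in>T. \<forall>u\<in>U. G {u, v} = (u \<in> N v)}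
     = (\<Prod>v\<in>T. p ^ card (N v) * (1 - p) ^ (card U - card (N v)))"
proof -
  have finU: "finite U" using U finite_subset by blast
  define edge where "edge = (\<lambda>(u::nat, v::nat). {u, v})"
  define A where "A = edge ` (U \<times> T)"
  define b where "b = (\<lambda>e. \<exists>u\<in>U. \<exists>v\<in>T. e = {u, v} \<and> u \<in> N v)"
  have inj: "inj_on edge (U \<times> T)"
    using disj unfolding inj_on_def edge_def by (auto simp: doubleton_eq_iff)
  have b_edge: "b {u, v} = (u \<in> N v)" if "u \<in> U" "v \<in> T" for u v
    using that disj unfolding b_def by (auto simp: doubleton_eq_iff)
  have A_sub: "A \<subseteq> gnp_edges n"
    unfolding A_def edge_def using U T disj by (auto intro!: doubleton_in_gnp_edges)
  have "{G. \<forall>v\<in>T. \<forall>u\<in>U. G {u, v} = (u \<in> N v)} = {G. \<forall>e\<in>A. G e = b e}"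
    unfolding A_def edge_def using b_edge by auto
  hence "measure_pmf.prob (gnp n p) {G. \<forall>v\<in>T. \<forall>u\<in>U. G {u, v} = (u \<in> N v)}
      = (\<Prod>e\<in>A. if b e then p else 1 - p)"
    using prob_gnp_edges_eq[OF A_sub p] by simp
  also have "\<dots> = (\<Prod>(u, v)\<in>U \<times> T. if b {u, v} then p else 1 - p)"
    unfolding A_def using prod.reindex[OF inj] by (simp add: edge_def case_prod_unfold)
  also have "\<dots> = (\<Prod>v\<in>T. \<Prod>u\<in>U. if u \<in> N v then p else 1 - p)"
    by (simp add: prod.cartesian_product[symmetric] b_edge cong: prod.cong)
      (subst prod.swap, simp)
  also have "\<dots> = (\<Prod>v\<in>T. p ^ card (N v) * (1 - p) ^ (card U - card (N v)))"
  proof (intro prod.cong refl)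
    fix v assume "v \<in> T"
    hence "N v \<subseteq> U" by (rule N)
    hence "U \<inter> N v = N v" "card (U - N v) = card U - card (N v)"
      using finU by (auto simp: card_Diff_subset finite_subset)
    thus "(\<Prod>u\<in>U. if u \<in> N v then p else 1 - p) = p ^ card (N v) * (1 - p) ^ (card U - card (N v))"
      using finU by (simp add: prod.If_cases Diff_eq)
  qed
  finally show ?thesis .
qed

definition low_degree_vertices :: "(nat set \<Rightarrow> bool) \<Rightarrow> nat set \<Rightarrow> nat \<Rightarrow> nat set \<Rightarrow> nat set" where
  "low_degree_vertices G U r V = {v \<in> V. card {u \<in> U. G {u, v}} < r}"

lemma sum_subsets_card_less:
  fixes f :: "nat \<Rightarrow> 'a :: comm_semiring_1"
  assumes "finite A"
  shows "(\<Sum>S\<in>{S. S \<subseteq> A \<and> card S < r}. f (card S)) = (\<Sum>j<r. of_nat (card A choose j) * f j)"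
proof -
  have "(\<Sum>S\<in>{S. S \<subseteq> A \<and> card S < r}. f (card S))
      = (\<Sum>j<r. \<Sum>S\<in>{S \<in> {S. S \<subseteq> A \<and> card S < r}. card S = j}. f (card S))"
    by (rule sum.group[symmetric]) (use assms in auto)
  also have "\<dots> = (\<Sum>j<r. of_nat (card A choose j) * f j)"
  proof (intro sum.cong refl)
    fix j assume "j \<in> {..<r}"
    hence "{S \<in> {S. S \<subseteq> A \<and> card S < r}. card S = j} = {S. S \<subseteq> A \<and> card S = j}" by auto
    thus "(\<Sum>S\<in>{S \<in> {S. S \<subseteq> A \<and> card S < r}. card S = j}. f (card S)) = of_nat (card A choose j) * f j"
      using n_subsets[OF assms, of j] by simp
  qed
  finally show ?thesis .
qed

lemma prob_many_low_degree_le: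
  assumes U: "U \<subseteq> {0..<n}" and V: "V \<subseteq> {0..<n}" and disj: "U \<inter> V = {}"
    and p: "0 \<le> p" "p \<le> 1"
  shows "measure_pmf.prob (gnp n p) {G. k \<le> card (low_degree_vertices G U r V)}
    \<le> real (card V choose k) * (\<Sum>j<r. real (card U choose j) * p ^ j * (1 - p) ^ (card U - j)) ^ k"
proof -
  define Sr where "Sr = {S. S \<subseteq> U \<and> card S < r}"
  define f where "f = (\<lambda>j. p ^ j * (1 - p) ^ (card U - j))"
  define TT where "TT = {T. T \<subseteq> V \<and> card T = k}"
  define E where "E = (\<lambda>T N. {G. \<forall>v\<in>T. \<forall>u\<in>U. G {u, v} = (u \<in> N v)})"
  let ?P = "measure_pmf.prob (gnp n p)"
  have finU: "finite U" and finV: "finite V" using U V finite_subset by blast+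
  have finSr: "finite Sr" unfolding Sr_def using finU by simp
  have finTT: "finite TT" unfolding TT_def using finV by simp
  have finT: "finite T" if "T \<in> TT" for T
    using that finV finite_subset unfolding TT_def by blast
  have finPiE: "finite (PiE T (\<lambda>_. Sr))" if "T \<in> TT" for T
    using finT[OF that] finSr by (intro finite_PiE)
  have "{G. k \<le> card (low_degree_vertices G U r V)} \<subseteq> (\<Union>T\<in>TT. \<Union>N\<in>PiE T (\<lambda>_. Sr). E T N)"
  proof
    fix G assume "G \<in> {G. k \<le> card (low_degree_vertices G U r V)}"
    then obtain T where T: "T \<subseteq> low_degree_vertices G U r V" "card T = k"
      by (auto intro: obtain_subset_with_card_n)
    define N where "N = restrict (\<lambda>v. {u \<in> U. G {u, v}}) T"
    have "T \<in> TT" "N \<in> PiE T (\<lambda>_. Sr)" "G \<in> E T N"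
      using T unfolding TT_def N_def Sr_def E_def low_degree_vertices_def by auto
    thus "G \<in> (\<Union>T\<in>TT. \<Union>N\<in>PiE T (\<lambda>_. Sr). E T N)" by blast
  qed
  hence "?P {G. k \<le> card (low_degree_vertices G U r V)} \<le> ?P (\<Union>T\<in>TT. \<Union>N\<in>PiE T (\<lambda>_. Sr). E T N)"
    by (intro measure_pmf.finite_measure_mono) simp_all
  also have "\<dots> \<le> (\<Sum>T\<in>TT. \<Sum>N\<in>PiE T (\<lambda>_. Sr). ?P (E T N))"
    using finTT finPiE
    by (intro order.trans[OF measure_pmf.finite_measure_subadditive_finite] sum_mono
        measure_pmf.finite_measure_subadditive_finite) auto
  also have "\<dots> = (\<Sum>T\<in>TT. (\<Sum>S\<in>Sr. f (card S)) ^ k)"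
  proof (intro sum.cong refl)
    fix T assume T: "T \<in> TT"
    hence TV: "T \<subseteq> V" and cT: "card T = k" unfolding TT_def by auto
    have "(\<Sum>N\<in>PiE T (\<lambda>_. Sr). ?P (E T N)) = (\<Sum>N\<in>PiE T (\<lambda>_. Sr). \<Prod>v\<in>T. f (card (N v)))"
      unfolding E_def f_def using TV U V disj p
      by (intro sum.cong refl prob_gnp_neighbourhoods_eq) (auto simp: Sr_def)
    also have "\<dots> = (\<Prod>v\<in>T. \<Sum>S\<in>Sr. f (card S))"
      by (rule prod_sum_PiE[symmetric]) (use finT[OF T] finSr in auto)
    finally show "(\<Sum>N\<in>PiE T (\<lambda>_. Sr). ?P (E T N)) = (\<Sum>S\<in>Sr. f (card S)) ^ k"
      using cT by simp
  qed
  also have "\<dots> = real (card V choose k) * (\<Sum>j<r. real (card U choose j) * f j) ^ k"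
    unfolding TT_def Sr_def using n_subsets[OF finV] sum_subsets_card_less[OF finU, of f r] by simp
  finally show ?thesis unfolding f_def by (simp only: mult.assoc)
qed

lemma binomial_lower_tail_le:
  assumes p: "0 \<le> p" "p \<le> 1"
  shows "(\<Sum>j<r. real (m choose j) * p ^ j * (1 - p) ^ (m - j))
     \<le> real r * exp (real r) * (1 + real m * p) ^ r * exp (- (real m * p))"
proof -
  define x where "x = real m * p"
  have x0: "0 \<le> x" unfolding x_def using p by simp
  have "real (m choose j) * p ^ j * (1 - p) ^ (m - j) \<le> (1 + x) ^ r * exp (real r - x)"
    if j: "j < r" for j
  proof (intro mult_mono)
    have "m choose j \<le> m ^ j" by (cases "j \<le> m") (simp_all add: binomial_le_pow binomial_eq_0)
    hence "real (m choose j) \<le> real m ^ j" by (metis of_nat_le_iff of_nat_power)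
    hence "real (m choose j) * p ^ j \<le> real m ^ j * p ^ j" using p by (simp add: mult_right_mono)
    also have "\<dots> = x ^ j" unfolding x_def by (simp add: power_mult_distrib)
    also have "\<dots> \<le> (1 + x) ^ r"
      using x0 j by (intro order.trans[OF power_mono power_increasing]) auto
    finally show "real (m choose j) * p ^ j \<le> (1 + x) ^ r" .
    have "(1 - p) ^ (m - j) \<le> exp (- p) ^ (m - j)"
      using p exp_ge_add_one_self[of "- p"] by (intro power_mono) simp_all
    also have "\<dots> = exp (- p * real (m - j))" by (simp add: exp_of_nat_mult[symmetric] mult.commute)
    also have "\<dots> \<le> exp (real r - x)"
    proof -
      have "real m - real (m - j) \<le> real j" by (cases "j \<le> m") (auto simp: of_nat_diff)
      hence "p * (real m - real (m - j)) \<le> p * real j" using p by (intro mult_left_mono) auto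
      also have "\<dots> \<le> real j" using p by (simp add: mult_left_le_one_le)
      also have "\<dots> \<le> real r" using j by simp
      finally show ?thesis unfolding x_def by (simp add: algebra_simps)
    qed
    finally show "(1 - p) ^ (m - j) \<le> exp (real r - x)" .
  qed (use x0 p in auto)
  hence "(\<Sum>j<r. real (m choose j) * p ^ j * (1 - p) ^ (m - j)) \<le> (\<Sum>j<r. (1 + x) ^ r * exp (real r - x))"
    by (intro sum_mono) simp
  also have "\<dots> = real r * exp (real r) * (1 + x) ^ r * exp (- x)"
    by (simp add: exp_diff exp_minus field_simps)
  finally show ?thesis unfolding x_def .
qed

text \<open>The Poisson(\<open>k\<close>) distribution has mass at most 1 at \<open>k\<close>.\<close>
lemma pow_le_fact_mult_exp: "real k ^ k \<le> fact k * exp (real k)"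
proof (cases "k = 0")
  case False
  hence "0 < real k" by simp
  hence "real k ^ k / fact k * exp (- real k) \<le> 1" using pmf_le_1[of "poisson_pmf (real k)" k] by simp
  thus ?thesis by (simp add: exp_minus field_simps)
qed simp

lemma choose_mult_power_le_exp:
  assumes "0 \<le> q" and "real N * q \<le> exp (-2) * real k"
  shows "real (N choose k) * q ^ k \<le> exp (- real k)"
proof -
  have "real (N choose k) * q ^ k \<le> real N ^ k / fact k * q ^ k"
  proof (rule mult_right_mono)
    have "real ((N choose k) * fact k) \<le> real (N ^ k)"
      by (rule of_nat_mono) (rule binomial_fact_pow)
    thus "real (N choose k) \<le> real N ^ k / fact k" by (simp add: field_simps)
  qed (use assms in simp)
  also have "\<dots> = (real N * q) ^ k / fact k" by (simp add: power_mult_distrib)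
  also have "\<dots> \<le> (exp (-2) * real k) ^ k / fact k"
    using assms by (intro divide_right_mono power_mono) auto
  also have "\<dots> = exp (-2) ^ k * (real k ^ k / fact k)" by (simp add: power_mult_distrib)
  also have "\<dots> \<le> exp (-2) ^ k * exp (real k)"
    using pow_le_fact_mult_exp[of k] by (intro mult_left_mono) (auto simp: divide_simps mult.commute)
  also have "\<dots> = exp (- real k)"
    by (simp add: exp_of_nat_mult[symmetric] exp_add[symmetric])
  finally show ?thesis .
qed

lemma prob_few_low_degree_ge:
  assumes U: "U \<subseteq> {0..<n}" and V: "V \<subseteq> {0..<n}" and disj: "U \<inter> V = {}"
    and p: "0 < p" "p \<le> 1"
    and small: "real n * p * (real r * exp (real r) * (1 + real (card U) * p) ^ r
                  * exp (- (real (card U) * p))) \<le> exp (-2)"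
  shows "measure_pmf.prob (gnp n p) {G. real (card (low_degree_vertices G U r V)) \<le> 1 / p}
           \<ge> 1 - exp (- 1 / p)"
proof -
  define q where "q = (\<Sum>j<r. real (card U choose j) * p ^ j * (1 - p) ^ (card U - j))"
  define Q where "Q = real r * exp (real r) * (1 + real (card U) * p) ^ r * exp (- (real (card U) * p))"
  define k where "k = nat \<lfloor>1 / p\<rfloor> + 1"
  define B where "B = {G. real (card (low_degree_vertices G U r V)) \<le> 1 / p}"
  let ?P = "measure_pmf.prob (gnp n p)"
  have k: "1 / p \<le> real k" unfolding k_def by linarith
  have q0: "0 \<le> q" unfolding q_def using p by (intro sum_nonneg) simp
  have "card V \<le> n" using card_mono[OF _ V] by simp
  hence "real (card V) * q \<le> real n * q" using q0 by (intro mult_right_mono) auto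
  also have "\<dots> \<le> real n * Q"
    unfolding q_def Q_def using p by (intro mult_left_mono binomial_lower_tail_le) auto
  also have "\<dots> \<le> exp (-2) / p" using small p unfolding Q_def by (simp add: field_simps)
  also have "\<dots> \<le> exp (-2) * real k" using k p by (simp add: divide_simps mult.commute)
  finally have Vq: "real (card V) * q \<le> exp (-2) * real k" .
  have "UNIV - B \<subseteq> {G. k \<le> card (low_degree_vertices G U r V)}"
    using p unfolding B_def k_def by (auto simp: not_le Suc_le_eq nat_less_iff floor_less_iff)
  hence "?P (UNIV - B) \<le> ?P {G. k \<le> card (low_degree_vertices G U r V)}"
    by (intro measure_pmf.finite_measure_mono) simp_all
  also have "\<dots> \<le> real (card V choose k) * q ^ k"
    unfolding q_def using p by (intro prob_many_low_degree_le[OF U V disj]) auto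
  also have "\<dots> \<le> exp (- real k)" by (rule choose_mult_power_le_exp[OF q0 Vq])
  also have "\<dots> \<le> exp (- 1 / p)" using k by simp
  finally show ?thesis
    using measure_pmf.prob_compl[of B "gnp n p"] unfolding B_def by simp
qed

lemma eventually_abs_le_1_of_smallo_powr:
  fixes p :: "nat \<Rightarrow> real"
  assumes "p \<in> o(\<lambda>n. real n powr a)" and "a \<le> 0"
  shows "\<forall>\<^sub>F n in at_top. \<bar>p n\<bar> \<le> 1"
proof -
  have "\<forall>\<^sub>F n in at_top. norm (p n) \<le> 1 * norm (real n powr a)"
    by (rule landau_o.smallD[OF assms(1)]) simp
  moreover have "\<forall>\<^sub>F n in at_top. (1::nat) \<le> n" by (rule eventually_ge_at_top)
  ultimately show ?thesis
  proof eventually_elim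
    case (elim n)
    have "real n powr a \<le> 1" using elim(2) assms(2) powr_mono2'[of a 1 "real n"] by simp
    thus ?case using elim(1) by simp
  qed
qed

lemma filterlim_mult_at_top_of_smallomega:
  fixes p m :: "nat \<Rightarrow> real"
  assumes p: "p \<in> \<omega>(\<lambda>n. 1 / real n)" and p_le: "\<forall>\<^sub>F n in at_top. \<bar>p n\<bar> \<le> 1"
    and K: "K > 0" and m: "\<And>n. real n < K * (m n + 1)"
  shows "filterlim (\<lambda>n. m n * \<bar>p n\<bar>) at_top at_top"
  unfolding filterlim_at_top
proof
  fix Z :: real
  have "\<forall>\<^sub>F n in at_top. norm (p n) \<ge> K * (Z + 1) * norm (1 / real n)"
    by (rule smallomegaD[OF p])
  moreover have "\<forall>\<^sub>F n in at_top. (1::nat) \<le> n" by (rule eventually_ge_at_top)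
  ultimately show "\<forall>\<^sub>F n in at_top. Z \<le> m n * \<bar>p n\<bar>"
    using p_le
  proof eventually_elim
    case (elim n)
    have "K * (Z + 1) \<le> real n * \<bar>p n\<bar>" using elim(1,2) by (simp add: divide_simps mult.commute)
    also have "\<dots> \<le> K * (m n + 1) * \<bar>p n\<bar>" using m[of n] by (intro mult_right_mono) auto
    finally have "Z + 1 \<le> (m n + 1) * \<bar>p n\<bar>" using K by (simp add: mult.assoc)
    thus ?case using elim(3) by (simp add: algebra_simps)
  qed
qed

text \<open>With \<open>y = 1 + m p\<close> and \<open>n p \<le> K y\<close>, the left-hand side is at most \<open>K r e^(r+1) y^(r+1) e^(-y) \<rightarrow> 0\<close>.\<close>
lemma eventually_tail_bound_small:
  fixes p m :: "nat \<Rightarrow> real"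
  assumes p_le: "\<forall>\<^sub>F n in at_top. \<bar>p n\<bar> \<le> 1" and lim: "filterlim (\<lambda>n. m n * \<bar>p n\<bar>) at_top at_top"
    and K: "K > 0" and m: "\<And>n. real n < K * (m n + 1)" and m0: "\<And>n. 0 \<le> m n"
  shows "\<forall>\<^sub>F n in at_top. real n * \<bar>p n\<bar> * (real r * exp (real r) * (1 + m n * \<bar>p n\<bar>) ^ r
           * exp (- (m n * \<bar>p n\<bar>))) \<le> exp (-2)"
proof -
  define C where "C = K * real r * exp (real r + 1)"
  define y where "y = (\<lambda>n. 1 + m n * \<bar>p n\<bar>)"
  have "filterlim y at_top at_top"
    unfolding y_def by (rule filterlim_tendsto_add_at_top[OF tendsto_const lim])
  hence "((\<lambda>n. y n ^ (r + 1) / exp (y n)) \<longlongrightarrow> 0) at_top"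
    by (rule filterlim_compose[OF tendsto_power_div_exp_0])
  hence "\<forall>\<^sub>F n in at_top. C * (y n ^ (r + 1) / exp (y n)) \<le> exp (-2)"
  proof (cases "r = 0")
    case False
    hence "C > 0" unfolding C_def using K by simp
    from \<open>(_ \<longlongrightarrow> 0) at_top\<close> have "\<forall>\<^sub>F n in at_top. y n ^ (r + 1) / exp (y n) < exp (-2) / C"
      by (rule order_tendstoD(2)) (use \<open>C > 0\<close> in simp)
    thus ?thesis by eventually_elim (use \<open>C > 0\<close> in \<open>simp add: field_simps\<close>)
  qed (simp add: C_def)
  with p_le show ?thesis
  proof eventually_elim
    case (elim n)
    have Q0: "0 \<le> real r * exp (real r) * y n ^ r * exp (- (m n * \<bar>p n\<bar>))"
      using m0[of n] unfolding y_def
      by (intro mult_nonneg_nonneg zero_le_power) (auto simp: zero_le_mult_iff)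
    have "real n * \<bar>p n\<bar> \<le> K * (m n + 1) * \<bar>p n\<bar>" using m[of n] by (intro mult_right_mono) auto
    also have "\<dots> \<le> K * y n" using K elim(1) unfolding y_def by (simp add: algebra_simps)
    finally have "real n * \<bar>p n\<bar> * (real r * exp (real r) * y n ^ r * exp (- (m n * \<bar>p n\<bar>)))
        \<le> K * y n * (real r * exp (real r) * y n ^ r * exp (1 - y n))"
      using mult_right_mono[OF _ Q0] unfolding y_def by simp
    also have "\<dots> = C * (y n ^ (r + 1) / exp (y n))"
      unfolding C_def by (simp add: exp_diff exp_add field_simps)
    finally show ?case using elim(2) unfolding y_def by simp
  qed
qed

theorem lemma6:
  fixes r :: nat and p :: "nat \<Rightarrow> real" and U W :: "nat \<Rightarrow> nat set"
  assumes r: "r \<ge> 2"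
    and p_lower: "p \<in> \<omega>(\<lambda>n. 1 / real n)"
    and p_upper: "p \<in> o(\<lambda>n. real n powr (- 1 / real r))"
    and U_sub: "\<And>n. U n \<subseteq> {0..<n}"
    and W_sub: "\<And>n. W n \<subseteq> {0..<n}"
    and U_card: "\<And>n. \<bar>real (card (U n)) - real n / (2 ^ r * fact r * sqrt (exp 1))\<bar> < 1"
  shows "\<exists>c>0. \<forall>\<^sub>F n in at_top.
           measure_pmf.prob (gnp n (p n))
             {G. real (card {v \<in> {0..<n} - (U n \<union> W n). card {u \<in> U n. G {u, v}} < r})
                   \<le> 1 / p n}
           \<ge> 1 - exp (- c / p n)"
proof (intro exI[of _ 1] conjI)
  define K :: real where "K = 2 ^ r * fact r * sqrt (exp 1)"
  have K: "K > 0" unfolding K_def by simp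
  have U_lin: "real n < K * (real (card (U n)) + 1)" for n
    using U_card[of n] K unfolding K_def by (simp add: field_simps abs_less_iff)
  have p_le: "\<forall>\<^sub>F n in at_top. \<bar>p n\<bar> \<le> 1"
    by (rule eventually_abs_le_1_of_smallo_powr[OF p_upper]) simp
  have "filterlim (\<lambda>n. real (card (U n)) * \<bar>p n\<bar>) at_top at_top"
    by (rule filterlim_mult_at_top_of_smallomega[OF p_lower p_le K U_lin])
  from eventually_tail_bound_small[OF p_le this K U_lin of_nat_0_le_iff, of r] p_le
  show "\<forall>\<^sub>F n in at_top. measure_pmf.prob (gnp n (p n))
          {G. real (card {v \<in> {0..<n} - (U n \<union> W n). card {u \<in> U n. G {u, v}} < r}) \<le> 1 / p n}
        \<ge> 1 - exp (- 1 / p n)"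
  proof eventually_elim
    case (elim n)
    show ?case
    proof (cases "p n > 0")
      case True
      have "{0..<n} - (U n \<union> W n) \<subseteq> {0..<n}" "U n \<inter> ({0..<n} - (U n \<union> W n)) = {}" by auto
      from prob_few_low_degree_ge[OF U_sub this True] elim True
      show ?thesis unfolding low_degree_vertices_def by simp
    next
      case False
      hence "1 - exp (- 1 / p n) \<le> 0" by (simp add: divide_nonpos_nonpos)
      thus ?thesis using measure_nonneg order.trans by blast
    qed
  qed
qed simp

end
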